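(* Let $f(\mathbf{x};\boldsymbol{\theta})=g(\mathbf{W}\mathbf{x};\bar{\boldsymbol{\theta}})$ be a network from $\mathbb{R}^{P}$ to $\mathbb{R}^{N}$ whose first layer is linear with weight $\mathbf{W}\in\mathbb{R}^{d\times P}$, with parameter vector $\boldsymbol{\theta}=(\theta_1,\dots,\theta_m)$ consisting of the entries of $\mathbf{W}$ together with the remaining parameters $\bar{\boldsymbol{\theta}}$, and $g$ differentiable in its first argument and twice differentiable in the parameters. Let $(\mathbf{x}_i,\mathbf{y}_i)_{i=1}^n$ be training data, with $x^{(i)}_p$ the $p$-th entry of $\mathbf{x}_i$. Suppose $\varepsilon,M_0>0$ are such that $\|f(\mathbf{x}_i,\boldsymbol{\theta})-\mathbf{y}_i\|_2<\varepsilon$ for all $i$ and $|\theta_j|^2\|\partial^2 f(\mathbf{x}_i,\boldsymbol{\theta})/\partial\theta_j^2\|_2<M_0$ for all $i,j$. Then $$\frac1n\sum_{i=1}^n\sum_{j=1}^m|\theta_j|^2\Big\|\frac{\partial f(\mathbf{x}_i,\boldsymbol{\theta})}{\partial\theta_j}\Big\|_2^2\;\ge\;\frac{1}{nd}\sum_{i=1}^n\sum_{p=1}^{P}\Big\|\frac{\partial f(\mathbf{x}_i,\boldsymbol{\theta})}{\partial x_p}\Big\|_2^2\,(x_p^{(i)})^2.$$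
   Context: The right-hand side, $\frac1n\sum_i\sum_p\|\partial f/\partial x_p(\mathbf{x}_i)\|_2^2 (x_p^{(i)})^2$, is called the input-invariant MLS (up to the factor $1/d$); the left-hand side is, up to $O(\varepsilon)$, the elementwise-adaptive sharpness $\operatorname{Tr}(\nabla^2_{\boldsymbol{\theta}}L(\boldsymbol{\theta})\odot|\boldsymbol{\theta}||\boldsymbol{\theta}|^T)$ of the MSE loss $L(\boldsymbol{\theta})=\frac1n\sum_i\frac12\|f(\mathbf{x}_i,\boldsymbol{\theta})-\mathbf{y}_i\|_2^2$. Here $d$ is the number of rows of the first-layer weight matrix $\mathbf{W}$. *)

theory Defs
  imports "HOL-Analysis.Analysis"
begin

definition vupd :: "'a^'n \<Rightarrow> 'n \<Rightarrow> 'a \<Rightarrow> 'a^'n" where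
  "vupd v j t = (\<chi> j'. if j' = j then t else v $ j')"

definition mupd :: "'a^'p^'d \<Rightarrow> 'd \<Rightarrow> 'p \<Rightarrow> 'a \<Rightarrow> 'a^'p^'d" where
  "mupd W k p t = (\<chi> k' p'. if k' = k \<and> p' = p then t else W $ k' $ p')"

definition net :: "(real^'d \<Rightarrow> real^'q \<Rightarrow> real^'N) \<Rightarrow> real^'P \<Rightarrow> real^'P^'d \<Rightarrow> real^'q \<Rightarrow> real^'N" where
  "net g x W thb = g (W *v x) thb"

definition dW :: "(real^'d \<Rightarrow> real^'q \<Rightarrow> real^'N) \<Rightarrow> real^'P \<Rightarrow> real^'P^'d \<Rightarrow> real^'q \<Rightarrow> 'd \<Rightarrow> 'P \<Rightarrow> real^'N" where
  "dW g x W thb k p = vector_derivative (\<lambda>t. net g x (mupd W k p t) thb) (at (W $ k $ p))"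

definition dW2 :: "(real^'d \<Rightarrow> real^'q \<Rightarrow> real^'N) \<Rightarrow> real^'P \<Rightarrow> real^'P^'d \<Rightarrow> real^'q \<Rightarrow> 'd \<Rightarrow> 'P \<Rightarrow> real^'N" where
  "dW2 g x W thb k p = vector_derivative
     (\<lambda>s. vector_derivative (\<lambda>t. net g x (mupd W k p t) thb) (at s)) (at (W $ k $ p))"

definition dT :: "(real^'d \<Rightarrow> real^'q \<Rightarrow> real^'N) \<Rightarrow> real^'P \<Rightarrow> real^'P^'d \<Rightarrow> real^'q \<Rightarrow> 'q \<Rightarrow> real^'N" where
  "dT g x W thb j = vector_derivative (\<lambda>t. net g x W (vupd thb j t)) (at (thb $ j))"

definition dT2 :: "(real^'d \<Rightarrow> real^'q \<Rightarrow> real^'N) \<Rightarrow> real^'P \<Rightarrow> real^'P^'d \<Rightarrow> real^'q \<Rightarrow> 'q \<Rightarrow> real^'N" where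
  "dT2 g x W thb j = vector_derivative
     (\<lambda>s. vector_derivative (\<lambda>t. net g x W (vupd thb j t)) (at s)) (at (thb $ j))"

definition dX :: "(real^'d \<Rightarrow> real^'q \<Rightarrow> real^'N) \<Rightarrow> real^'P \<Rightarrow> real^'P^'d \<Rightarrow> real^'q \<Rightarrow> 'P \<Rightarrow> real^'N" where
  "dX g x W thb p = vector_derivative (\<lambda>t. net g (vupd x p t) W thb) (at (x $ p))"

end

theory Submission
  imports Defs
begin

text \<open>As the first layer is linear, the chain rule expresses both kinds of derivatives through
  \<open>G\<^sub>k = D\<^sub>zg(W x) e\<^sub>k\<close>: the weight derivative is \<open>x\<^sub>p G\<^sub>k\<close> and the input derivative
  is \<open>\<Sum>\<^sub>k W\<^sub>k\<^sub>p G\<^sub>k\<close>. Cauchy-Schwarz over the \<open>d\<close> rows then bounds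
  \<open>x\<^sub>p\<^sup>2 |\<partial>f/\<partial>x\<^sub>p|\<^sup>2\<close> by \<open>d \<Sum>\<^sub>k W\<^sub>k\<^sub>p\<^sup>2 x\<^sub>p\<^sup>2 |G\<^sub>k|\<^sup>2 = d \<Sum>\<^sub>k W\<^sub>k\<^sub>p\<^sup>2 |\<partial>f/\<partial>W\<^sub>k\<^sub>p|\<^sup>2\<close>
  sample by sample, and the remaining parameters only add nonnegative terms. The fitting and
  curvature hypotheses are needed only to relate the left-hand side to the adaptive sharpness,
  not for the inequality itself.\<close>

lemma sum_mult_point_update:
  fixes f c :: "'j::finite \<Rightarrow> 'a::comm_ring_1"
  shows "(\<Sum>j\<in>UNIV. (if j = p then t else f j) * c j) = (\<Sum>j\<in>UNIV. f j * c j) + (t - f p) * c p"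
proof -
  have "(\<Sum>j\<in>UNIV. (if j = p then t else f j) * c j)
      = (\<Sum>j\<in>UNIV. f j * c j + (if j = p then (t - f p) * c j else 0))"
    by (rule sum.cong) (auto simp: algebra_simps)
  then show ?thesis by (simp add: sum.distrib)
qed

lemma mupd_mult_vector:
  fixes W :: "'a::comm_ring_1^'p^'d"
  shows "mupd W k p t *v x = W *v x + ((t - W $ k $ p) * x $ p) *s axis k 1"
  by (auto simp add: mupd_def matrix_vector_mult_def vec_eq_iff axis_def sum_mult_point_update)

lemma mult_vector_vupd:
  fixes W :: "'a::comm_ring_1^'p^'d"
  shows "W *v vupd x p t = W *v x + (t - x $ p) *s column p W"
  using sum_mult_point_update[of p t "\<lambda>j. x $ j"]
  by (auto simp add: vupd_def matrix_vector_mult_def vec_eq_iff column_def mult.commute right_diff_distrib)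

lemma power2_norm_sum_le:
  fixes f :: "'k \<Rightarrow> 'b::real_normed_vector"
  shows "(norm (\<Sum>k\<in>A. f k))\<^sup>2 \<le> real (card A) * (\<Sum>k\<in>A. (norm (f k))\<^sup>2)"
proof -
  have "(norm (\<Sum>k\<in>A. f k))\<^sup>2 \<le> (\<Sum>k\<in>A. norm (f k) * 1)\<^sup>2"
    by (simp add: norm_sum power_mono)
  also have "\<dots> \<le> (\<Sum>k\<in>A. (norm (f k))\<^sup>2) * (\<Sum>k\<in>A. 1\<^sup>2)"
    by (rule Cauchy_Schwarz_ineq_sum)
  finally show ?thesis by (simp add: mult.commute)
qed

lemma vector_derivative_along_line:
  fixes h :: "'a::real_normed_vector \<Rightarrow> 'b::real_normed_vector"
  assumes "(h has_derivative D) (at a)"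
  shows "vector_derivative (\<lambda>t. h (a + (t - t0) *\<^sub>R v)) (at t0) = D v"
proof -
  have "((\<lambda>t. a + (t - t0) *\<^sub>R v) has_derivative (\<lambda>t. t *\<^sub>R v)) (at t0)"
    by (auto intro!: derivative_eq_intros)
  with assms have "((\<lambda>t. h (a + (t - t0) *\<^sub>R v)) has_derivative (\<lambda>t. t *\<^sub>R D v)) (at t0)"
    using diff_chain_at[of "\<lambda>t. a + (t - t0) *\<^sub>R v"] has_derivative_linear[OF assms]
    by (force simp: o_def linear_scale)
  then show ?thesis
    by (simp add: has_vector_derivative_def vector_derivative_at)
qed

context
  fixes g :: "real^'d \<Rightarrow> real^'q \<Rightarrow> real^'N" and D :: "real^'d \<Rightarrow> real^'N"
    and W :: "real^'P^'d" and thb :: "real^'q" and x :: "real^'P"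
  assumes first_layer_derivative: "((\<lambda>z. g z thb) has_derivative D) (at (W *v x))"
begin

lemma dW_chain_rule: "dW g x W thb k p = x $ p *\<^sub>R D (axis k 1)"
proof -
  have "dW g x W thb k p = vector_derivative
      (\<lambda>t. g (W *v x + (t - W $ k $ p) *\<^sub>R (x $ p *\<^sub>R axis k 1)) thb) (at (W $ k $ p))"
    by (simp add: dW_def net_def mupd_mult_vector scalar_mult_eq_scaleR)
  also have "\<dots> = D (x $ p *\<^sub>R axis k 1)"
    using first_layer_derivative by (rule vector_derivative_along_line)
  finally show ?thesis
    using has_derivative_linear[OF first_layer_derivative] by (simp add: linear_scale)
qed

lemma dX_chain_rule: "dX g x W thb p = (\<Sum>k\<in>UNIV. W $ k $ p *\<^sub>R D (axis k 1))"
proof -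
  have "dX g x W thb p = vector_derivative
      (\<lambda>t. g (W *v x + (t - x $ p) *\<^sub>R column p W) thb) (at (x $ p))"
    by (simp add: dX_def net_def mult_vector_vupd scalar_mult_eq_scaleR)
  also have "\<dots> = D (column p W)"
    using first_layer_derivative by (rule vector_derivative_along_line)
  also have "\<dots> = D (\<Sum>k\<in>UNIV. W $ k $ p *\<^sub>R axis k 1)"
    using basis_expansion[of "column p W"] by (simp add: column_def scalar_mult_eq_scaleR)
  finally show ?thesis
    using has_derivative_linear[OF first_layer_derivative] by (simp add: linear_sum linear_scale)
qed

lemma input_sensitivity_le_first_layer_sensitivity:
  "(\<Sum>p\<in>UNIV. (norm (dX g x W thb p))\<^sup>2 * (x $ p)\<^sup>2)
     \<le> real CARD('d) * (\<Sum>k\<in>UNIV. \<Sum>p\<in>UNIV. \<bar>W $ k $ p\<bar>\<^sup>2 * (norm (dW g x W thb k p))\<^sup>2)"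
proof -
  have "(\<Sum>p\<in>UNIV. (norm (dX g x W thb p))\<^sup>2 * (x $ p)\<^sup>2)
      \<le> (\<Sum>p\<in>UNIV. real CARD('d) * (\<Sum>k\<in>UNIV. (norm (W $ k $ p *\<^sub>R D (axis k 1)))\<^sup>2) * (x $ p)\<^sup>2)"
    unfolding dX_chain_rule by (intro sum_mono mult_right_mono power2_norm_sum_le) auto
  also have "\<dots> = real CARD('d) * (\<Sum>p\<in>UNIV. \<Sum>k\<in>UNIV. \<bar>W $ k $ p\<bar>\<^sup>2 * (norm (dW g x W thb k p))\<^sup>2)"
    by (simp add: dW_chain_rule sum_distrib_left sum_distrib_right power_mult_distrib mult_ac)
  finally show ?thesis
    by (simp add: sum.swap[of _ "UNIV :: 'P set"])
qed

end

lemma input_sensitivity_le_sample_sharpness: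
  fixes g :: "real^'d \<Rightarrow> real^'q \<Rightarrow> real^'N"
  assumes "(\<lambda>z. g z thb) differentiable (at (W *v x))"
  shows "(\<Sum>p\<in>UNIV. (norm (dX g x W thb p))^2 * (x $ p)^2) / real CARD('d)
      \<le> (\<Sum>k\<in>UNIV. \<Sum>p\<in>UNIV. \<bar>W $ k $ p\<bar>^2 * (norm (dW g x W thb k p))^2)
         + (\<Sum>j\<in>UNIV. \<bar>thb $ j\<bar>^2 * (norm (dT g x W thb j))^2)"
proof -
  obtain D where "((\<lambda>z. g z thb) has_derivative D) (at (W *v x))"
    using assms unfolding differentiable_def by blast
  then have "(\<Sum>p\<in>UNIV. (norm (dX g x W thb p))^2 * (x $ p)^2)
      \<le> real CARD('d) * (\<Sum>k\<in>UNIV. \<Sum>p\<in>UNIV. \<bar>W $ k $ p\<bar>^2 * (norm (dW g x W thb k p))^2)"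
    by (rule input_sensitivity_le_first_layer_sensitivity)
  moreover have "0 \<le> real CARD('d) * (\<Sum>j\<in>UNIV. \<bar>thb $ j\<bar>^2 * (norm (dT g x W thb j))^2)"
    by (intro mult_nonneg_nonneg sum_nonneg) simp_all
  ultimately show ?thesis
    by (simp add: pos_divide_le_eq algebra_simps)
qed

theorem proposition5:
  fixes g :: "real^'d \<Rightarrow> real^'q \<Rightarrow> real^'N"
    and W :: "real^'P^'d" and thb :: "real^'q"
    and n :: nat and x :: "nat \<Rightarrow> real^'P" and y :: "nat \<Rightarrow> real^'N"
    and \<epsilon> M0 :: real
  assumes g_diff_input: "\<And>z th. (\<lambda>z. g z th) differentiable (at z)"
    and g_diff_param: "\<And>z th. (\<lambda>th. g z th) differentiable (at th)"
    and g_diff2_param: "\<And>z th j. (\<lambda>th. vector_derivative (\<lambda>t. g z (vupd th j t)) (at (th $ j)))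
                                   differentiable (at th)"
    and eps_pos: "\<epsilon> > 0" and M0_pos: "M0 > 0"
    and fit: "\<And>i. i < n \<Longrightarrow> norm (net g (x i) W thb - y i) < \<epsilon>"
    and curvW: "\<And>i k p. i < n \<Longrightarrow> \<bar>W $ k $ p\<bar>^2 * norm (dW2 g (x i) W thb k p) < M0"
    and curvT: "\<And>i j. i < n \<Longrightarrow> \<bar>thb $ j\<bar>^2 * norm (dT2 g (x i) W thb j) < M0"
  shows "(1 / real n) * (\<Sum>i<n. (\<Sum>k\<in>UNIV. \<Sum>p\<in>UNIV. \<bar>W $ k $ p\<bar>^2 * (norm (dW g (x i) W thb k p))^2)
                                + (\<Sum>j\<in>UNIV. \<bar>thb $ j\<bar>^2 * (norm (dT g (x i) W thb j))^2))
         \<ge> (1 / (real n * real CARD('d))) *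
             (\<Sum>i<n. \<Sum>p\<in>UNIV. (norm (dX g (x i) W thb p))^2 * (x i $ p)^2)"
proof -
  have "(\<Sum>i<n. \<Sum>p\<in>UNIV. (norm (dX g (x i) W thb p))^2 * (x i $ p)^2) / real CARD('d)
      \<le> (\<Sum>i<n. (\<Sum>k\<in>UNIV. \<Sum>p\<in>UNIV. \<bar>W $ k $ p\<bar>^2 * (norm (dW g (x i) W thb k p))^2)
                + (\<Sum>j\<in>UNIV. \<bar>thb $ j\<bar>^2 * (norm (dT g (x i) W thb j))^2))"
    by (subst sum_divide_distrib) (intro sum_mono input_sensitivity_le_sample_sharpness g_diff_input)
  from mult_left_mono[OF this, of "1 / real n"] show ?thesis
    by simp
qed

end
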